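(* Let $N\ge2$, let $v_1,\dots,v_N$ be distinct reals with prior probabilities $p(v_n)>0$, $\sum_np(v_n)=1$, and let $\lambda,\sigma_Z,T>0$, $G$ the CDF of $N(0,\sigma_Z^2T)$. For a continuous signal $\tilde s$ with density $q$, CDF $Q$, and posteriors $p(v_n|s)$ such that $s\mapsto\mathbb E[\tilde v|s]=\sum_nv_np(v_n|s)$ is strictly increasing on $\operatorname{support}(q)$, the informed trader's value $$\frac12\Big\{\mathbb E\big[\mathbb E[\tilde v|\tilde s]^2\big]+\mathbb E[Z_T^2]-W_2^2(F_s,G)\Big\}-\lambda I(\tilde s;\tilde v)$$ equals $$\int\mathbb E[\tilde v|s]\,G^{-1}(Q(s))\,q(s)\,ds-\lambda\Big\{\sum_{n=1}^N\int\log\big(p(v_n|s)\big)p(v_n|s)q(s)\,ds-\sum_{n=1}^N\log\big(p(v_n)\big)p(v_n)\Big\}.$$ Consequently, the informed trader's optimization problem is to maximize the latter expression over $(p(\cdot|\cdot),q(\cdot))$ subject to $\sum_{n=1}^Np(v_n|s)=1$ for all $s$ and $\int p(v_n|s)q(s)\,ds=p(v_n)$ for all $1\le n\le N$.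
   Context: $Z_T\sim N(0,\sigma_Z^2T)$ is the terminal noise trade, $F_s$ is the distribution function of $\mathbb E[\tilde v|\tilde s]$, $W_2$ is the Wasserstein-2 distance, and $I(\tilde s;\tilde v)=\mathbb H(p)-\int q(s)\mathbb H(p(\cdot|s))\,ds$ is the mutual information with $\mathbb H(\mu)=-\sum\mu\log\mu$ the entropy. *)

theory Defs
  imports "HOL-Probability.Probability"
begin

definition couplings :: "real measure \<Rightarrow> real measure \<Rightarrow> (real \<times> real) measure set" where
  "couplings \<mu> \<nu> = {\<pi>. prob_space \<pi> \<and> sets \<pi> = sets (borel :: (real \<times> real) measure)
      \<and> distr \<pi> borel fst = \<mu> \<and> distr \<pi> borel snd = \<nu>}"

definition W2_sq :: "real measure \<Rightarrow> real measure \<Rightarrow> ennreal" where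
  "W2_sq \<mu> \<nu> = (INF \<pi> \<in> couplings \<mu> \<nu>. \<integral>\<^sup>+ z. ennreal ((fst z - snd z)\<^sup>2) \<partial>\<pi>)"

definition quantile :: "(real \<Rightarrow> real) \<Rightarrow> real \<Rightarrow> real" where
  "quantile F u = Inf {x. u \<le> F x}"

definition entropy_vec :: "nat \<Rightarrow> (nat \<Rightarrow> real) \<Rightarrow> real" where
  "entropy_vec N \<mu> = - (\<Sum>n=1..N. \<mu> n * ln (\<mu> n))"

definition mutual_info :: "nat \<Rightarrow> (nat \<Rightarrow> real) \<Rightarrow> (nat \<Rightarrow> real \<Rightarrow> real) \<Rightarrow> (real \<Rightarrow> real) \<Rightarrow> real" where
  "mutual_info N p post q = entropy_vec N p - (\<integral> s. q s * entropy_vec N (\<lambda>n. post n s) \<partial>lborel)"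

definition cond_mean :: "nat \<Rightarrow> (nat \<Rightarrow> real) \<Rightarrow> (nat \<Rightarrow> real \<Rightarrow> real) \<Rightarrow> real \<Rightarrow> real" where
  "cond_mean N v post s = (\<Sum>n=1..N. v n * post n s)"

text \<open>Gaussian law N(0, sigma^2 T) (second argument of normal_density is the standard deviation).\<close>
definition gauss :: "real \<Rightarrow> real \<Rightarrow> real measure" where
  "gauss \<sigma> T = density lborel (normal_density 0 (\<sigma> * sqrt T))"

end

(*
  Let m = E[v | s] and Y = G^-1 o Q, where Q is the (continuous) distribution function of s.
  Then Y has law N(0, sigma^2 T), and Y is comonotone with m because m is monotone on the
  support of q.  Among all couplings of the laws of m and Y the comonotone one maximises
  E[X Y]: write X Y = a Y + integral over t in [a, b] of [t < X] Y, and for each level t the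
  bathtub principle says that E[Y; X > t] is largest when {X > t} is an upper level set of Y.
  Hence W2^2 = E m^2 - 2 E[m Y] + E Y^2, which turns the first term into the integral of
  m * G^-1(Q) * q; the entropy term is the definition of mutual information, rearranged.
*)

theory Submission
  imports Defs
begin

lemma couplingsD:
  assumes "\<pi> \<in> couplings \<mu> \<nu>"
  shows "prob_space \<pi>" "sets \<pi> = sets borel" "space \<pi> = UNIV"
    "distr \<pi> borel fst = \<mu>" "distr \<pi> borel snd = \<nu>"
  using assms unfolding couplings_def by (auto dest: sets_eq_imp_space_eq)

lemma couplings_measurable:
  "\<pi> \<in> couplings \<mu> \<nu> \<Longrightarrow> f \<in> borel_measurable borel \<Longrightarrow> f \<in> borel_measurable \<pi>"
  using measurable_cong_sets[OF couplingsD(2) refl] by blast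

lemma
  fixes f :: "real \<Rightarrow> real"
  assumes eq: "distr N borel g = distr M borel h"
    and [measurable]: "g \<in> borel_measurable N" "h \<in> borel_measurable M"
    and [measurable]: "f \<in> borel_measurable borel"
  shows integral_comp_eq_of_distr_eq: "(\<integral>x. f (g x) \<partial>N) = (\<integral>x. f (h x) \<partial>M)"
    and integrable_comp_iff_of_distr_eq:
      "integrable N (\<lambda>x. f (g x)) \<longleftrightarrow> integrable M (\<lambda>x. f (h x))"
proof -
  have "(\<integral>x. f (g x) \<partial>N) = integral\<^sup>L (distr N borel g) f"
    by (rule integral_distr[symmetric]) measurable
  also have "\<dots> = (\<integral>x. f (h x) \<partial>M)"
    unfolding eq by (rule integral_distr) measurable
  finally show "(\<integral>x. f (g x) \<partial>N) = (\<integral>x. f (h x) \<partial>M)" .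
  have "integrable N (\<lambda>x. f (g x)) \<longleftrightarrow> integrable (distr N borel g) f"
    by (rule integrable_distr_eq[symmetric]) measurable
  also have "\<dots> \<longleftrightarrow> integrable M (\<lambda>x. f (h x))"
    unfolding eq by (rule integrable_distr_eq) measurable
  finally show "integrable N (\<lambda>x. f (g x)) \<longleftrightarrow> integrable M (\<lambda>x. f (h x))" .
qed

lemma measure_vimage_eq_of_distr_eq:
  assumes eq: "distr N borel g = distr M borel h"
    and "g \<in> borel_measurable N" "h \<in> borel_measurable M" "A \<in> sets borel"
  shows "measure N {x \<in> space N. g x \<in> A} = measure M {x \<in> space M. h x \<in> A}"
  using measure_distr[of g N borel A] measure_distr[of h M borel A] assms
  by (simp add: vimage_def Int_def conj_commute)

lemma borel_measurable_fst_snd [measurable]: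
  "(fst :: real \<times> real \<Rightarrow> real) \<in> borel_measurable borel"
  "(snd :: real \<times> real \<Rightarrow> real) \<in> borel_measurable borel"
  by (intro borel_measurable_continuous_onI continuous_intros)+

lemma integral_mult_layer_cake:
  fixes X Y :: "'a \<Rightarrow> real"
  assumes "sigma_finite_measure M"
    and [measurable]: "X \<in> borel_measurable M" "Y \<in> borel_measurable M"
    and X: "AE x in M. a \<le> X x \<and> X x \<le> b" and Y: "integrable M Y"
  shows "integrable lborel (\<lambda>t. indicator {a..b} t * (\<integral>x. (if t < X x then Y x else 0) \<partial>M))"
    and "(\<integral>x. X x * Y x \<partial>M) = a * (\<integral>x. Y x \<partial>M)
           + (\<integral>t. indicator {a..b} t * (\<integral>x. (if t < X x then Y x else 0) \<partial>M) \<partial>lborel)"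
proof -
  interpret sigma_finite_measure M by fact
  interpret pair_sigma_finite M lborel ..
  define F where "F x t = indicator {a..b} t * (if t < X x then Y x else 0)" for x t
  have F_meas: "case_prod F \<in> borel_measurable (M \<Otimes>\<^sub>M lborel)"
    unfolding F_def by measurable
  have F_eq: "F x = (\<lambda>t. indicator {a..<X x} t * Y x)" if "a \<le> X x" "X x \<le> b" for x
    using that by (auto simp: F_def indicator_def fun_eq_iff)
  have bound: "integrable M (\<lambda>x. (b - a) * \<bar>Y x\<bar>)"
    using Y by simp
  have XY: "integrable M (\<lambda>x. (X x - a) * Y x)"
  proof (rule Bochner_Integration.integrable_bound[OF bound])
    show "AE x in M. norm ((X x - a) * Y x) \<le> norm ((b - a) * \<bar>Y x\<bar>)"
      using X by eventually_elim (auto simp: abs_mult intro!: mult_right_mono)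
  qed measurable
  have F_int: "integrable (M \<Otimes>\<^sub>M lborel) (case_prod F)"
  proof (rule Fubini_integrable[OF F_meas])
    show "integrable M (\<lambda>x. \<integral>t. norm (case_prod F (x, t)) \<partial>lborel)"
    proof (rule Bochner_Integration.integrable_bound[OF bound])
      show "AE x in M. norm (\<integral>t. norm (case_prod F (x, t)) \<partial>lborel) \<le> norm ((b - a) * \<bar>Y x\<bar>)"
        using X by eventually_elim (auto simp: F_eq abs_mult intro!: mult_right_mono)
    qed (use F_meas in measurable)
    show "AE x in M. integrable lborel (\<lambda>t. case_prod F (x, t))"
      using X by eventually_elim (simp add: F_eq)
  qed
  have F_snd: "(\<integral>x. F x t \<partial>M) = indicator {a..b} t * (\<integral>x. (if t < X x then Y x else 0) \<partial>M)" for t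
    unfolding F_def by (rule integral_mult_right_zero)
  show "integrable lborel (\<lambda>t. indicator {a..b} t * (\<integral>x. (if t < X x then Y x else 0) \<partial>M))"
    using integrable_snd[OF F_int] by (simp add: F_snd)
  have "(\<integral>x. X x * Y x \<partial>M) = (\<integral>x. (X x - a) * Y x + a * Y x \<partial>M)"
    by (simp add: algebra_simps)
  also have "\<dots> = (\<integral>x. (X x - a) * Y x \<partial>M) + a * (\<integral>x. Y x \<partial>M)"
    using XY Y by simp
  also have "(\<integral>x. (X x - a) * Y x \<partial>M) = (\<integral>x. (\<integral>t. F x t \<partial>lborel) \<partial>M)"
  proof (rule integral_cong_AE)
    show "AE x in M. (X x - a) * Y x = (\<integral>t. F x t \<partial>lborel)"
      using X by eventually_elim (simp add: F_eq)
  qed (use F_meas in measurable)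
  also have "\<dots> = (\<integral>t. (\<integral>x. F x t \<partial>M) \<partial>lborel)"
    using Fubini_integral[OF F_int] by simp
  finally show "(\<integral>x. X x * Y x \<partial>M) = a * (\<integral>x. Y x \<partial>M)
           + (\<integral>t. indicator {a..b} t * (\<integral>x. (if t < X x then Y x else 0) \<partial>M) \<partial>lborel)"
    by (simp add: F_snd)
qed

lemma bathtub_principle:
  fixes Y :: "'a \<Rightarrow> real" and g :: "'b \<Rightarrow> real"
  assumes "prob_space M" "prob_space N"
    and Y_meas [measurable]: "Y \<in> borel_measurable M"
    and g_meas [measurable]: "g \<in> borel_measurable N"
    and distr_eq: "distr N borel g = distr M borel Y" and Y: "integrable M Y"
    and A [measurable]: "A \<in> sets M" and B [measurable]: "B \<in> sets N" and AB: "measure N B = measure M A"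
    and S: "AE x in M. x \<in> S"
    and upper: "\<And>x y. x \<in> S - A \<Longrightarrow> y \<in> S \<inter> A \<Longrightarrow> Y x \<le> Y y"
  shows "(\<integral>x. indicator B x * g x \<partial>N) \<le> (\<integral>x. indicator A x * Y x \<partial>M)"
proof -
  interpret M: prob_space M by fact
  interpret N: prob_space N by fact
  have g: "integrable N g"
    using integrable_comp_iff_of_distr_eq[OF distr_eq g_meas Y_meas, where f="\<lambda>y. y"] Y by simp
  consider "S \<inter> A = {}" | "S - A = {}" | "S \<inter> A \<noteq> {}" "S - A \<noteq> {}"
    by blast
  then show ?thesis
  proof cases
    case 1
    then have "AE x in M. x \<notin> A"
      using S by (auto elim: eventually_mono)
    then have "A \<in> null_sets M"
      using AE_iff_null_sets[OF A] by blast
    then have "B \<in> null_sets N"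
      using AB measure_eq_0_null_sets by (intro null_setsI[OF _ B]) (simp add: N.emeasure_eq_measure)
    then have "AE x in N. x \<notin> B"
      by (rule AE_not_in)
    then have "(\<integral>x. indicator B x * g x \<partial>N) = 0"
      by (subst integral_cong_AE[where g="\<lambda>_. 0"]) (auto elim: eventually_mono)
    moreover have "(\<integral>x. indicator A x * Y x \<partial>M) = 0"
      using \<open>AE x in M. x \<notin> A\<close>
      by (subst integral_cong_AE[where g="\<lambda>_. 0"]) (auto elim: eventually_mono)
    ultimately show ?thesis by simp
  next
    case 2
    then have "AE x in M. x \<in> A"
      using S by (auto elim: eventually_mono)
    then have "measure M A = 1"
      by (subst M.prob_eq_1) auto
    then have "AE x in N. x \<in> B"
      using AB by (intro N.AE_prob_1) auto
    then have "(\<integral>x. indicator B x * g x \<partial>N) = (\<integral>x. g x \<partial>N)"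
      by (intro integral_cong_AE) (auto elim: eventually_mono)
    also have "\<dots> = (\<integral>x. Y x \<partial>M)"
      using integral_comp_eq_of_distr_eq[OF distr_eq g_meas Y_meas, of "\<lambda>y. y"] by simp
    also have "\<dots> = (\<integral>x. indicator A x * Y x \<partial>M)"
      using \<open>AE x in M. x \<in> A\<close> by (intro integral_cong_AE) (auto elim: eventually_mono)
    finally show ?thesis by simp
  next
    case 3
    txt \<open>With \<open>c\<close> separating the values of \<open>Y\<close> off and on \<open>A\<close>, the pointwise bound
      \<open>1\<^sub>B g \<le> (g - c)\<^sup>+ + c 1\<^sub>B\<close> integrates to a quantity depending only on the law of \<open>g\<close>
      and the mass of \<open>B\<close>, and it is an equality for \<open>Y\<close> and \<open>A\<close>.\<close>
    define c where "c = Inf (Y ` (S \<inter> A))"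
    have c_le: "c \<le> Y y" if "y \<in> S \<inter> A" for y
      unfolding c_def using 3 that upper by (auto intro!: cInf_lower bdd_belowI2)
    have le_c: "Y x \<le> c" if "x \<in> S - A" for x
      unfolding c_def using 3 that upper by (auto intro!: cINF_greatest)
    have excess_meas: "(\<lambda>y. max (y - c) 0) \<in> borel_measurable borel"
      by measurable
    have excess: "integrable M (\<lambda>x. max (Y x - c) 0)"
      using Y by (auto intro!: integrable_max)
    have g_excess: "integrable N (\<lambda>x. max (g x - c) 0)"
      using integrable_comp_iff_of_distr_eq[OF distr_eq g_meas Y_meas excess_meas] excess by simp
    have B_int: "integrable N (\<lambda>x. c * indicator B x)"
      using integrable_real_indicator[OF B] by (simp add: N.emeasure_eq_measure)
    have A_int: "integrable M (\<lambda>x. c * indicator A x)"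
      using integrable_real_indicator[OF A] by (simp add: M.emeasure_eq_measure)
    have "(\<integral>x. indicator B x * g x \<partial>N) \<le> (\<integral>x. max (g x - c) 0 + c * indicator B x \<partial>N)"
      using integrable_mult_indicator[OF B g] g_excess B_int
      by (intro integral_mono) (auto simp: indicator_def)
    also have "\<dots> = (\<integral>x. max (g x - c) 0 \<partial>N) + c * measure N B"
      using g_excess B_int by (simp add: sets.Int_space_eq2[OF B])
    also have "\<dots> = (\<integral>x. max (Y x - c) 0 \<partial>M) + c * measure M A"
      using integral_comp_eq_of_distr_eq[OF distr_eq g_meas Y_meas excess_meas] AB by simp
    also have "\<dots> = (\<integral>x. max (Y x - c) 0 + c * indicator A x \<partial>M)"
      using excess A_int by (simp add: sets.Int_space_eq2[OF A])
    also have "\<dots> = (\<integral>x. indicator A x * Y x \<partial>M)"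
    proof (rule integral_cong_AE)
      show "AE x in M. max (Y x - c) 0 + c * indicator A x = indicator A x * Y x"
        using S
      proof eventually_elim
        case (elim x)
        then show ?case
          using c_le[of x] le_c[of x] by (cases "x \<in> A") (auto simp: indicator_def)
      qed
    qed measurable
    finally show ?thesis .
  qed
qed

lemma coupling_integral_mult_le_comonotone:
  fixes X Y :: "'a \<Rightarrow> real"
  assumes "prob_space M"
    and X_meas [measurable]: "X \<in> borel_measurable M"
    and Y_meas [measurable]: "Y \<in> borel_measurable M"
    and X: "\<And>x. x \<in> space M \<Longrightarrow> a \<le> X x \<and> X x \<le> b" and Y: "integrable M Y"
    and S: "AE x in M. x \<in> S"
    and comonotone: "\<And>x y. x \<in> S \<Longrightarrow> y \<in> S \<Longrightarrow> X x < X y \<Longrightarrow> Y x \<le> Y y"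
    and \<pi>: "\<pi> \<in> couplings (distr M borel X) (distr M borel Y)"
  shows "(\<integral>z. fst z * snd z \<partial>\<pi>) \<le> (\<integral>x. X x * Y x \<partial>M)"
proof -
  interpret M: prob_space M by fact
  note \<pi>_facts = couplingsD[OF \<pi>]
  interpret \<pi>: prob_space \<pi> by (fact \<pi>_facts)
  have fst_meas [measurable]: "fst \<in> borel_measurable \<pi>"
    and snd_meas [measurable]: "snd \<in> borel_measurable \<pi>"
    by (simp_all add: couplings_measurable[OF \<pi>])
  have id_meas: "(\<lambda>y::real. y) \<in> borel_measurable borel"
    by simp
  have snd_int: "integrable \<pi> snd"
    using integrable_comp_iff_of_distr_eq[OF \<pi>_facts(5) snd_meas Y_meas id_meas] Y by simp
  have X_AE: "AE x in M. a \<le> X x \<and> X x \<le> b"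
    using X by simp
  then have "AE x in distr \<pi> borel fst. a \<le> x \<and> x \<le> b"
    unfolding \<pi>_facts(4) by (subst AE_distr_iff) auto
  then have fst_AE: "AE z in \<pi>. a \<le> fst z \<and> fst z \<le> b"
    by (subst (asm) AE_distr_iff) auto
  have upper_le: "(\<integral>z. (if t < fst z then snd z else 0) \<partial>\<pi>) \<le> (\<integral>x. (if t < X x then Y x else 0) \<partial>M)"
    for t
  proof -
    have "(\<integral>z. indicator {z. t < fst z} z * snd z \<partial>\<pi>) \<le> (\<integral>x. indicator {x \<in> space M. t < X x} x * Y x \<partial>M)"
    proof (rule bathtub_principle[OF M.prob_space_axioms \<pi>.prob_space_axioms Y_meas snd_meas \<pi>_facts(5) Y])
      show "{z. t < fst z} \<in> sets \<pi>"
        using measurable_sets[OF fst_meas, of "{t<..}"] \<pi>_facts(3) by (simp add: vimage_def)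
      show "measure \<pi> {z. t < fst z} = measure M {x \<in> space M. t < X x}"
        using measure_vimage_eq_of_distr_eq[OF \<pi>_facts(4) fst_meas X_meas, of "{t<..}"] \<pi>_facts(3) by simp
      show "AE x in M. x \<in> S \<inter> space M"
        using S by (auto elim: eventually_mono)
      show "Y x \<le> Y y" if "x \<in> S \<inter> space M - {x \<in> space M. t < X x}" "y \<in> S \<inter> space M \<inter> {x \<in> space M. t < X x}" for x y
        using that by (intro comonotone) auto
    qed measurable
    moreover have "(\<integral>z. indicator {z. t < fst z} z * snd z \<partial>\<pi>) = (\<integral>z. (if t < fst z then snd z else 0) \<partial>\<pi>)"
      by (rule Bochner_Integration.integral_cong) auto
    moreover have "(\<integral>x. indicator {x \<in> space M. t < X x} x * Y x \<partial>M) = (\<integral>x. (if t < X x then Y x else 0) \<partial>M)"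
      by (rule Bochner_Integration.integral_cong) auto
    ultimately show ?thesis
      by simp
  qed
  have "(\<integral>z. fst z * snd z \<partial>\<pi>) = a * (\<integral>z. snd z \<partial>\<pi>)
      + (\<integral>t. indicator {a..b} t * (\<integral>z. (if t < fst z then snd z else 0) \<partial>\<pi>) \<partial>lborel)"
    by (rule integral_mult_layer_cake(2)[OF \<pi>.sigma_finite_measure_axioms fst_meas snd_meas fst_AE snd_int])
  also have "\<dots> \<le> a * (\<integral>x. Y x \<partial>M)
      + (\<integral>t. indicator {a..b} t * (\<integral>x. (if t < X x then Y x else 0) \<partial>M) \<partial>lborel)"
  proof -
    have "(\<integral>z. snd z \<partial>\<pi>) = (\<integral>x. Y x \<partial>M)"
      using integral_comp_eq_of_distr_eq[OF \<pi>_facts(5) snd_meas Y_meas id_meas] by simp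
    moreover have "(\<integral>t. indicator {a..b} t * (\<integral>z. (if t < fst z then snd z else 0) \<partial>\<pi>) \<partial>lborel)
        \<le> (\<integral>t. indicator {a..b} t * (\<integral>x. (if t < X x then Y x else 0) \<partial>M) \<partial>lborel)"
      using integral_mult_layer_cake(1)[OF \<pi>.sigma_finite_measure_axioms fst_meas snd_meas fst_AE snd_int]
        integral_mult_layer_cake(1)[OF M.sigma_finite_measure_axioms X_meas Y_meas X_AE Y]
      by (intro integral_mono) (auto intro: mult_left_mono upper_le)
    ultimately show ?thesis by simp
  qed
  also have "\<dots> = (\<integral>x. X x * Y x \<partial>M)"
    by (rule integral_mult_layer_cake(2)[OF M.sigma_finite_measure_axioms X_meas Y_meas X_AE Y, symmetric])
  finally show ?thesis .
qed

lemma
  fixes f g :: "'a \<Rightarrow> real"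
  assumes [measurable]: "f \<in> borel_measurable M" "g \<in> borel_measurable M"
    and f2: "integrable M (\<lambda>x. (f x)\<^sup>2)" and g2: "integrable M (\<lambda>x. (g x)\<^sup>2)"
  shows integrable_square_diff: "integrable M (\<lambda>x. (f x - g x)\<^sup>2)"
    and integral_square_diff: "(\<integral>x. (f x - g x)\<^sup>2 \<partial>M)
      = (\<integral>x. (f x)\<^sup>2 \<partial>M) - 2 * (\<integral>x. f x * g x \<partial>M) + (\<integral>x. (g x)\<^sup>2 \<partial>M)"
proof -
  have fg: "integrable M (\<lambda>x. f x * g x)"
  proof (rule Bochner_Integration.integrable_bound[OF Bochner_Integration.integrable_add[OF f2 g2]])
    show "AE x in M. norm (f x * g x) \<le> norm ((f x)\<^sup>2 + (g x)\<^sup>2)"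
    proof (intro AE_I2)
      fix x
      have "2 * \<bar>f x\<bar> * \<bar>g x\<bar> \<le> (f x)\<^sup>2 + (g x)\<^sup>2"
        using sum_squares_bound[of "\<bar>f x\<bar>" "\<bar>g x\<bar>"] by simp
      moreover have "0 \<le> \<bar>f x\<bar> * \<bar>g x\<bar>"
        by simp
      ultimately have "\<bar>f x\<bar> * \<bar>g x\<bar> \<le> (f x)\<^sup>2 + (g x)\<^sup>2"
        by linarith
      then show "norm (f x * g x) \<le> norm ((f x)\<^sup>2 + (g x)\<^sup>2)"
        by (simp add: abs_mult)
    qed
  qed measurable
  have expand: "(f x - g x)\<^sup>2 = (f x)\<^sup>2 - 2 * (f x * g x) + (g x)\<^sup>2" for x
    by (simp add: power2_diff)
  show "integrable M (\<lambda>x. (f x - g x)\<^sup>2)"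
    unfolding expand using f2 g2 fg by simp
  show "(\<integral>x. (f x - g x)\<^sup>2 \<partial>M)
      = (\<integral>x. (f x)\<^sup>2 \<partial>M) - 2 * (\<integral>x. f x * g x \<partial>M) + (\<integral>x. (g x)\<^sup>2 \<partial>M)"
    unfolding expand using f2 g2 fg by simp
qed

lemma (in finite_measure) integrable_square_of_bounded:
  fixes f :: "'a \<Rightarrow> real"
  assumes [measurable]: "f \<in> borel_measurable M"
    and bounded: "\<And>x. x \<in> space M \<Longrightarrow> a \<le> f x \<and> f x \<le> b"
  shows "integrable M (\<lambda>x. (f x)\<^sup>2)"
proof (rule integrable_const_bound[where B="(\<bar>a\<bar> + \<bar>b\<bar>)\<^sup>2"])
  show "AE x in M. norm ((f x)\<^sup>2) \<le> (\<bar>a\<bar> + \<bar>b\<bar>)\<^sup>2"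
  proof (intro AE_I2 impI)
    fix x assume "x \<in> space M"
    then have "\<bar>f x\<bar> \<le> \<bar>a\<bar> + \<bar>b\<bar>"
      using bounded by fastforce
    then show "norm ((f x)\<^sup>2) \<le> (\<bar>a\<bar> + \<bar>b\<bar>)\<^sup>2"
      using abs_le_square_iff[of "f x" "\<bar>a\<bar> + \<bar>b\<bar>"] by simp
  qed
qed measurable

lemma distr_pair_in_couplings:
  fixes X Y :: "'a \<Rightarrow> real"
  assumes "prob_space M" "X \<in> borel_measurable M" "Y \<in> borel_measurable M"
  shows "distr M borel (\<lambda>x. (X x, Y x)) \<in> couplings (distr M borel X) (distr M borel Y)"
  using assms by (auto simp: couplings_def distr_distr comp_def intro: prob_space.prob_space_distr)

theorem W2_sq_distr_comonotone:
  fixes X Y :: "'a \<Rightarrow> real"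
  assumes "prob_space M"
    and X_meas [measurable]: "X \<in> borel_measurable M"
    and Y_meas [measurable]: "Y \<in> borel_measurable M"
    and X: "\<And>x. x \<in> space M \<Longrightarrow> a \<le> X x \<and> X x \<le> b"
    and Y2: "integrable M (\<lambda>x. (Y x)\<^sup>2)"
    and S: "AE x in M. x \<in> S"
    and comonotone: "\<And>x y. x \<in> S \<Longrightarrow> y \<in> S \<Longrightarrow> X x < X y \<Longrightarrow> Y x \<le> Y y"
  shows "W2_sq (distr M borel X) (distr M borel Y) = ennreal (\<integral>x. (X x - Y x)\<^sup>2 \<partial>M)"
proof -
  interpret M: prob_space M by fact
  have X2: "integrable M (\<lambda>x. (X x)\<^sup>2)"
    by (rule M.integrable_square_of_bounded[OF X_meas X])
  have Y: "integrable M Y"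
    by (rule M.square_integrable_imp_integrable[OF Y_meas Y2])
  have sq_meas: "(\<lambda>y::real. y\<^sup>2) \<in> borel_measurable borel"
    by measurable
  have coupling_cost:
    "(\<integral>\<^sup>+z. ennreal ((fst z - snd z)\<^sup>2) \<partial>\<pi>) = ennreal (\<integral>x. (X x - Y x)\<^sup>2 \<partial>M)
       + ennreal (2 * ((\<integral>x. X x * Y x \<partial>M) - (\<integral>z. fst z * snd z \<partial>\<pi>)))"
    if \<pi>: "\<pi> \<in> couplings (distr M borel X) (distr M borel Y)" for \<pi>
  proof -
    note \<pi>_facts = couplingsD[OF \<pi>]
    have fst_meas [measurable]: "fst \<in> borel_measurable \<pi>"
      and snd_meas [measurable]: "snd \<in> borel_measurable \<pi>"
      by (simp_all add: couplings_measurable[OF \<pi>])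
    have fst2: "integrable \<pi> (\<lambda>z. (fst z)\<^sup>2)"
      using integrable_comp_iff_of_distr_eq[OF \<pi>_facts(4) fst_meas X_meas sq_meas] X2 by simp
    have snd2: "integrable \<pi> (\<lambda>z. (snd z)\<^sup>2)"
      using integrable_comp_iff_of_distr_eq[OF \<pi>_facts(5) snd_meas Y_meas sq_meas] Y2 by simp
    have "(\<integral>\<^sup>+z. ennreal ((fst z - snd z)\<^sup>2) \<partial>\<pi>) = ennreal (\<integral>z. (fst z - snd z)\<^sup>2 \<partial>\<pi>)"
      by (rule nn_integral_eq_integral[OF integrable_square_diff[OF fst_meas snd_meas fst2 snd2]]) simp
    also have "(\<integral>z. (fst z - snd z)\<^sup>2 \<partial>\<pi>) = (\<integral>x. (X x - Y x)\<^sup>2 \<partial>M)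
        + 2 * ((\<integral>x. X x * Y x \<partial>M) - (\<integral>z. fst z * snd z \<partial>\<pi>))"
      using integral_square_diff[OF fst_meas snd_meas fst2 snd2] integral_square_diff[OF X_meas Y_meas X2 Y2]
        integral_comp_eq_of_distr_eq[OF \<pi>_facts(4) fst_meas X_meas sq_meas]
        integral_comp_eq_of_distr_eq[OF \<pi>_facts(5) snd_meas Y_meas sq_meas]
      by simp
    finally show ?thesis
      using coupling_integral_mult_le_comonotone[OF M.prob_space_axioms X_meas Y_meas X Y S comonotone \<pi>]
      by (simp add: ennreal_plus)
  qed
  define \<pi>\<^sub>0 where "\<pi>\<^sub>0 = distr M borel (\<lambda>x. (X x, Y x))"
  have \<pi>\<^sub>0: "\<pi>\<^sub>0 \<in> couplings (distr M borel X) (distr M borel Y)"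
    unfolding \<pi>\<^sub>0_def by (rule distr_pair_in_couplings[OF M.prob_space_axioms X_meas Y_meas])
  have "(\<integral>z. fst z * snd z \<partial>\<pi>\<^sub>0) = (\<integral>x. X x * Y x \<partial>M)"
    unfolding \<pi>\<^sub>0_def by (subst integral_distr) auto
  then have "(\<integral>\<^sup>+z. ennreal ((fst z - snd z)\<^sup>2) \<partial>\<pi>\<^sub>0) = ennreal (\<integral>x. (X x - Y x)\<^sup>2 \<partial>M)"
    using coupling_cost[OF \<pi>\<^sub>0] by simp
  then show ?thesis
    unfolding W2_sq_def using coupling_cost \<pi>\<^sub>0
    by (intro antisym INF_greatest INF_lower2[OF \<pi>\<^sub>0]) auto
qed

lemma (in real_distribution) borel_measurable_cdf [measurable]: "cdf M \<in> borel_measurable borel"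
  by (intro borel_measurable_mono) (auto simp: mono_def cdf_nondecreasing)

lemma (in real_distribution) measure_cdf_le:
  assumes atomless: "\<And>x. measure M {x} = 0" and w: "0 \<le> w" "w \<le> 1"
  shows "measure M {x. cdf M x \<le> w} = w"
proof (cases "w = 1")
  case True
  then have "{x. cdf M x \<le> w} = space M"
    using cdf_bounded_prob by auto
  then show ?thesis
    using True prob_space by simp
next
  case False
  define D where "D = {x. cdf M x \<le> w}"
  have cont: "continuous_on A (cdf M)" for A
    using isCont_cdf atomless by (simp add: continuous_at_imp_continuous_on)
  obtain u where u: "w < cdf M u"
    using order_tendstoD(1)[OF cdf_lim_at_top_prob, of w] False w
    by (meson eventually_at_top_linorder order_refl order_le_neq_trans)
  have D_le_u: "x \<le> u" if "x \<in> D" for x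
    using that u cdf_nondecreasing[of u x] unfolding D_def by force
  then have bdd: "bdd_above D"
    by (rule bdd_aboveI)
  show ?thesis
  proof (cases "D = {}")
    case True
    have "w \<le> 0"
    proof (rule tendsto_lowerbound[OF cdf_lim_at_bot])
      show "\<forall>\<^sub>F x in at_bot. w \<le> cdf M x"
        using True unfolding D_def by (auto intro: always_eventually less_imp_le simp: not_le)
    qed simp
    then show ?thesis
      using True w unfolding D_def by simp
  next
    case False
    define s where "s = Sup D"
    have "closed D"
      unfolding D_def by (intro closed_Collect_le cont continuous_on_const)
    then have "s \<in> D"
      unfolding s_def using False bdd by (intro closed_contains_Sup)
    have D_eq: "D = {..s}"
    proof
      show "D \<subseteq> {..s}"
        unfolding s_def using bdd by (auto intro: cSup_upper)
      show "{..s} \<subseteq> D"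
        using \<open>s \<in> D\<close> cdf_nondecreasing unfolding D_def by (auto intro: order_trans)
    qed
    obtain x where x: "s \<le> x" "x \<le> u" "cdf M x = w"
      using IVT'[of "cdf M" s w u] \<open>s \<in> D\<close> D_le_u u cont unfolding D_def by force
    then have "x \<in> D"
      unfolding D_def by simp
    then have "x = s"
      using x(1) D_eq by auto
    then show ?thesis
      using D_eq x unfolding D_def by (simp add: cdf_def)
  qed
qed

lemma (in real_distribution) AE_cdf_between:
  assumes atomless: "\<And>x. measure M {x} = 0"
  shows "AE x in M. 0 < cdf M x \<and> cdf M x < 1"
proof -
  have "measure M {x. 0 < cdf M x} = 1"
    using prob_compl[of "{x. cdf M x \<le> 0}"] measure_cdf_le[OF atomless, of 0]
    by (simp add: Compl_eq_Diff_UNIV[symmetric] Collect_neg_eq[symmetric] not_le)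
  then have "AE x in M. 0 < cdf M x"
    using AE_prob_1[of "{x. 0 < cdf M x}"] by simp
  moreover have "measure M {x. cdf M x < 1} = 1"
  proof (rule antisym)
    show "1 \<le> measure M {x. cdf M x < 1}"
    proof (rule dense_le_bounded[of 0])
      fix w :: real assume w: "0 < w" "w < 1"
      have "w = measure M {x. cdf M x \<le> w}"
        using measure_cdf_le[OF atomless, of w] w by simp
      also have "\<dots> \<le> measure M {x. cdf M x < 1}"
        using w by (intro finite_measure_mono) auto
      finally show "w \<le> measure M {x. cdf M x < 1}" .
    qed simp
  qed (rule prob_le_1)
  then have "AE x in M. cdf M x < 1"
    using AE_prob_1[of "{x. cdf M x < 1}"] by simp
  ultimately show ?thesis
    by eventually_elim simp
qed

lemma quantile_cdf_le_iff:
  assumes "real_distribution \<nu>" "0 < u" "u < 1"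
  shows "quantile (cdf \<nu>) u \<le> y \<longleftrightarrow> u \<le> cdf \<nu> y"
proof -
  interpret cdf_distribution \<nu>
    using assms(1) by (simp add: cdf_distribution_def)
  show ?thesis
    unfolding quantile_def using pseudoinverse[of u y] assms by simp
qed

lemma quantile_cdf_mono:
  assumes \<nu>: "real_distribution \<nu>" and u: "0 < u" "u \<le> u'" "u' < 1"
  shows "quantile (cdf \<nu>) u \<le> quantile (cdf \<nu>) u'"
proof -
  have "u' \<le> cdf \<nu> (quantile (cdf \<nu>) u')"
    using quantile_cdf_le_iff[OF \<nu>, of u' "quantile (cdf \<nu>) u'"] u by simp
  then show ?thesis
    using quantile_cdf_le_iff[OF \<nu>, of u] u by simp
qed

lemma borel_measurable_quantile_cdf [measurable]:
  assumes \<nu>: "real_distribution \<nu>"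
  shows "quantile (cdf \<nu>) \<in> borel_measurable borel"
proof (rule borel_measurable_piecewise_mono[of "{{..0}, {0<..<1}, {1}, {1<..}}"])
  interpret real_distribution \<nu> by fact
  have "quantile (cdf \<nu>) u = Inf UNIV" if "u \<le> 0" for u
    unfolding quantile_def using that cdf_nonneg by (metis (mono_tags) UNIV_eq_I mem_Collect_eq order_trans)
  then have "mono_on {..0} (quantile (cdf \<nu>))"
    by (intro mono_onI) simp
  moreover have "quantile (cdf \<nu>) u = Inf {}" if "1 < u" for u
    unfolding quantile_def using that cdf_bounded_prob by (metis (mono_tags) empty_Collect_eq not_le order_trans)
  then have "mono_on {1<..} (quantile (cdf \<nu>))"
    by (intro mono_onI) simp
  moreover have "mono_on {0<..<1} (quantile (cdf \<nu>))"
    using quantile_cdf_mono[OF \<nu>] by (intro mono_onI) auto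
  ultimately show "mono_on c (quantile (cdf \<nu>))" if "c \<in> {{..0}, {0<..<1}, {1}, {1<..}}" for c
    using that by (auto intro: mono_onI)
  show "\<Union> {{..0}, {0<..<1}, {1}, {1<..}} = (UNIV :: real set)"
    by (auto simp: not_le)
qed auto

theorem (in real_distribution) distr_quantile_cdf:
  assumes atomless: "\<And>x. measure M {x} = 0" and \<nu>: "real_distribution \<nu>"
  shows "distr M borel (\<lambda>x. quantile (cdf \<nu>) (cdf M x)) = \<nu>"
proof (rule cdf_unique)
  interpret \<nu>: real_distribution \<nu> by fact
  note [measurable] = borel_measurable_quantile_cdf[OF \<nu>]
  show "real_distribution (distr M borel (\<lambda>x. quantile (cdf \<nu>) (cdf M x)))"
    by (intro real_distribution_distr) measurable
  show "real_distribution \<nu>" by fact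
  show "cdf (distr M borel (\<lambda>x. quantile (cdf \<nu>) (cdf M x))) = cdf \<nu>"
  proof
    fix y
    have "cdf (distr M borel (\<lambda>x. quantile (cdf \<nu>) (cdf M x))) y
        = measure M ((\<lambda>x. quantile (cdf \<nu>) (cdf M x)) -` {..y} \<inter> space M)"
      unfolding cdf_def2[of "distr M borel _"] by (rule measure_distr) measurable
    also have "\<dots> = measure M {x. quantile (cdf \<nu>) (cdf M x) \<le> y}"
      by (simp add: vimage_def)
    also have "\<dots> = measure M {x. cdf M x \<le> cdf \<nu> y}"
    proof (rule measure_eq_AE)
      show "AE x in M. (x \<in> {x. quantile (cdf \<nu>) (cdf M x) \<le> y}) = (x \<in> {x. cdf M x \<le> cdf \<nu> y})"
        using AE_cdf_between[OF atomless] by eventually_elim (simp add: quantile_cdf_le_iff[OF \<nu>])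
    qed auto
    also have "\<dots> = cdf \<nu> y"
      using measure_cdf_le[OF atomless] \<nu>.cdf_nonneg \<nu>.cdf_bounded_prob by simp
    finally show "cdf (distr M borel (\<lambda>x. quantile (cdf \<nu>) (cdf M x))) y = cdf \<nu> y" .
  qed
qed

theorem (in real_distribution) integral_mult_quantile_cdf_eq_W2_sq:
  assumes atomless: "\<And>x. measure M {x} = 0"
    and \<nu>: "real_distribution \<nu>" and \<nu>2: "integrable \<nu> (\<lambda>z. z\<^sup>2)"
    and m_meas [measurable]: "m \<in> borel_measurable borel"
    and m: "\<And>x. a \<le> m x \<and> m x \<le> b"
    and S: "AE x in M. x \<in> S" and m_mono: "mono_on S m"
  shows "(1/2) * ((\<integral>x. (m x)\<^sup>2 \<partial>M) + (\<integral>z. z\<^sup>2 \<partial>\<nu>) - enn2real (W2_sq (distr M borel m) \<nu>))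
    = (\<integral>x. m x * quantile (cdf \<nu>) (cdf M x) \<partial>M)"
proof -
  define Y where "Y x = quantile (cdf \<nu>) (cdf M x)" for x
  have Y_meas [measurable]: "Y \<in> borel_measurable M"
    using borel_measurable_quantile_cdf[OF \<nu>] unfolding Y_def[abs_def] by measurable
  have distr_Y: "distr M borel Y = \<nu>"
    unfolding Y_def[abs_def] by (rule distr_quantile_cdf[OF atomless \<nu>])
  have sq_meas: "(\<lambda>y::real. y\<^sup>2) \<in> borel_measurable borel"
    by measurable
  have Y2: "integrable M (\<lambda>x. (Y x)\<^sup>2)"
    using \<nu>2 integrable_distr_eq[OF Y_meas sq_meas] by (simp add: distr_Y)
  have m2: "integrable M (\<lambda>x. (m x)\<^sup>2)"
    using m by (intro integrable_square_of_bounded) auto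
  \<comment> \<open>The quantile function is monotone only on \<open>{0<..<1}\<close>; its values at 0 and 1 are junk.\<close>
  define S' where "S' = S \<inter> {x. 0 < cdf M x \<and> cdf M x < 1}"
  have S': "AE x in M. x \<in> S'"
    using S AE_cdf_between[OF atomless] unfolding S'_def by eventually_elim simp
  have comonotone: "Y x \<le> Y y" if "x \<in> S'" "y \<in> S'" "m x < m y" for x y
  proof -
    have "x \<le> y"
      using that mono_onD[OF m_mono, of y x] unfolding S'_def by force
    then show ?thesis
      using that cdf_nondecreasing[of x y] quantile_cdf_mono[OF \<nu>] unfolding S'_def Y_def by auto
  qed
  have "W2_sq (distr M borel m) \<nu> = ennreal (\<integral>x. (m x - Y x)\<^sup>2 \<partial>M)"
    using W2_sq_distr_comonotone[where X=m and Y=Y and a=a and b=b,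
        OF prob_space_axioms _ Y_meas _ Y2 S' comonotone] m
    by (simp add: distr_Y)
  then have "enn2real (W2_sq (distr M borel m) \<nu>) = (\<integral>x. (m x - Y x)\<^sup>2 \<partial>M)"
    by (simp add: integral_nonneg)
  also have "\<dots> = (\<integral>x. (m x)\<^sup>2 \<partial>M) - 2 * (\<integral>x. m x * Y x \<partial>M) + (\<integral>x. (Y x)\<^sup>2 \<partial>M)"
    by (rule integral_square_diff[OF _ Y_meas m2 Y2]) measurable
  moreover have "(\<integral>z. z\<^sup>2 \<partial>\<nu>) = (\<integral>x. (Y x)\<^sup>2 \<partial>M)"
    using integral_distr[OF Y_meas sq_meas] by (simp add: distr_Y)
  ultimately show ?thesis
    by (simp add: Y_def)
qed

lemma real_distribution_density_lborel:
  fixes q :: "real \<Rightarrow> real"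
  assumes "q \<in> borel_measurable borel" "\<And>s. 0 \<le> q s" "(\<integral>\<^sup>+s. ennreal (q s) \<partial>lborel) = 1"
  shows "real_distribution (density lborel q)"
  unfolding real_distribution_def real_distribution_axioms_def
  using assms by (auto intro!: prob_spaceI simp: emeasure_density)

lemma measure_density_lborel_singleton:
  fixes q :: "real \<Rightarrow> real"
  assumes "q \<in> borel_measurable borel"
  shows "measure (density lborel q) {x} = 0"
  using assms by (simp add: measure_def emeasure_density)

lemma real_distribution_gauss: "0 < \<sigma> \<Longrightarrow> 0 < T \<Longrightarrow> real_distribution (gauss \<sigma> T)"
  unfolding gauss_def real_distribution_def real_distribution_axioms_def
  by (simp add: prob_space_normal_density)

lemma integrable_gauss_square: "0 < \<sigma> \<Longrightarrow> 0 < T \<Longrightarrow> integrable (gauss \<sigma> T) (\<lambda>z. z\<^sup>2)"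
  unfolding gauss_def using integrable_normal_moment[of "\<sigma> * sqrt T" 0 2]
  by (subst integrable_density) simp_all

lemma borel_measurable_cond_mean [measurable]:
  "(\<And>n. n \<in> {1..N} \<Longrightarrow> post n \<in> borel_measurable borel)
    \<Longrightarrow> cond_mean N v post \<in> borel_measurable borel"
  unfolding cond_mean_def[abs_def] by (intro borel_measurable_sum borel_measurable_times) auto

lemma abs_cond_mean_le:
  assumes "\<And>n. n \<in> {1..N} \<Longrightarrow> 0 \<le> post n s \<and> post n s \<le> 1"
  shows "\<bar>cond_mean N v post s\<bar> \<le> (\<Sum>n=1..N. \<bar>v n\<bar>)"
proof -
  have "\<bar>cond_mean N v post s\<bar> \<le> (\<Sum>n=1..N. \<bar>v n\<bar> * post n s)"
    unfolding cond_mean_def using sum_abs[of "\<lambda>n. v n * post n s" "{1..N}"] assms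
    by (simp add: abs_mult)
  also have "\<dots> \<le> (\<Sum>n=1..N. \<bar>v n\<bar>)"
    using assms by (intro sum_mono) (simp add: mult_left_le)
  finally show ?thesis .
qed

lemma abs_ln_mult_self_le_one:
  fixes x :: real
  assumes "0 \<le> x" "x \<le> 1"
  shows "\<bar>ln x * x\<bar> \<le> 1"
proof (cases "x = 0")
  case False
  then have "0 < x"
    using assms by simp
  have "- ln x = ln (1 / x)"
    using \<open>0 < x\<close> by (simp add: ln_div)
  also have "\<dots> \<le> 1 / x - 1"
    using \<open>0 < x\<close> by (intro ln_le_minus_one) simp
  finally have "- ln x * x \<le> 1 - x"
    using \<open>0 < x\<close> by (simp add: field_simps)
  moreover have "ln x * x \<le> 0"
    using \<open>0 < x\<close> assms by (simp add: mult_nonpos_nonneg)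
  ultimately show ?thesis
    using assms by linarith
qed simp

lemma mutual_info_eq_integral_ln:
  fixes q :: "real \<Rightarrow> real"
  assumes q_meas [measurable]: "q \<in> borel_measurable borel"
    and q_nonneg: "\<And>s. 0 \<le> q s" and q_int: "integrable lborel q"
    and post_meas: "\<And>n. n \<in> {1..N} \<Longrightarrow> post n \<in> borel_measurable borel"
    and post_bounds: "\<And>n s. n \<in> {1..N} \<Longrightarrow> 0 \<le> post n s \<and> post n s \<le> 1"
  shows "mutual_info N p post q
    = (\<Sum>n=1..N. \<integral>s. ln (post n s) * post n s * q s \<partial>lborel) - (\<Sum>n=1..N. ln (p n) * p n)"
proof -
  have summand_integrable: "integrable lborel (\<lambda>s. ln (post n s) * post n s * q s)" if n: "n \<in> {1..N}" for n
  proof (rule Bochner_Integration.integrable_bound[OF q_int])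
    note [measurable] = post_meas[OF n]
    show "(\<lambda>s. ln (post n s) * post n s * q s) \<in> borel_measurable lborel"
      by measurable
    show "AE s in lborel. norm (ln (post n s) * post n s * q s) \<le> norm (q s)"
    proof (intro AE_I2)
      fix s
      have "\<bar>ln (post n s) * post n s\<bar> * q s \<le> 1 * q s"
        using abs_ln_mult_self_le_one post_bounds[OF n] q_nonneg by (intro mult_right_mono) auto
      then show "norm (ln (post n s) * post n s * q s) \<le> norm (q s)"
        using q_nonneg[of s] by (simp add: abs_mult)
    qed
  qed
  have "(\<integral>s. q s * entropy_vec N (\<lambda>n. post n s) \<partial>lborel)
      = (\<integral>s. - (\<Sum>n=1..N. ln (post n s) * post n s * q s) \<partial>lborel)"
    unfolding entropy_vec_def by (simp add: sum_distrib_left mult_ac)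
  also have "\<dots> = - (\<Sum>n=1..N. \<integral>s. ln (post n s) * post n s * q s \<partial>lborel)"
    using summand_integrable by simp
  finally show ?thesis
    unfolding mutual_info_def entropy_vec_def by (simp add: mult_ac)
qed

theorem lemma2:
  fixes N :: nat and v :: "nat \<Rightarrow> real" and p :: "nat \<Rightarrow> real"
    and post :: "nat \<Rightarrow> real \<Rightarrow> real" and q :: "real \<Rightarrow> real"
    and lam \<sigma>Z T :: real
  assumes N2: "N \<ge> 2"
    and v_distinct: "inj_on v {1..N}"
    and p_pos: "\<forall>n\<in>{1..N}. p n > 0"
    and p_sum: "(\<Sum>n=1..N. p n) = 1"
    and lam_pos: "lam > 0" and sig_pos: "\<sigma>Z > 0" and T_pos: "T > 0"
    and q_meas: "q \<in> borel_measurable borel"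
    and q_nonneg: "\<forall>s. q s \<ge> 0"
    and q_prob: "(\<integral>\<^sup>+ s. ennreal (q s) \<partial>lborel) = 1"
    and post_meas: "\<forall>n\<in>{1..N}. post n \<in> borel_measurable borel"
    and post_nonneg: "\<forall>n\<in>{1..N}. \<forall>s. post n s \<ge> 0"
    and post_sum: "\<forall>s. (\<Sum>n=1..N. post n s) = 1"
    and post_consistent: "\<forall>n\<in>{1..N}. (\<integral> s. post n s * q s \<partial>lborel) = p n"
    and mono: "strict_mono_on {s. q s > 0} (cond_mean N v post)"
  shows "(1/2) * ((\<integral> s. (cond_mean N v post s)\<^sup>2 \<partial>(density lborel q))
              + (\<integral> z. z\<^sup>2 \<partial>(gauss \<sigma>Z T))
              - enn2real (W2_sq (distr (density lborel q) borel (cond_mean N v post)) (gauss \<sigma>Z T)))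
          - lam * mutual_info N p post q
       = (\<integral> s. cond_mean N v post s * quantile (cdf (gauss \<sigma>Z T)) (cdf (density lborel q) s) * q s \<partial>lborel)
          - lam * ((\<Sum>n=1..N. (\<integral> s. ln (post n s) * post n s * q s \<partial>lborel))
                   - (\<Sum>n=1..N. ln (p n) * p n))"
proof -
  \<comment> \<open>The identity does not use \<open>N2\<close>, \<open>v_distinct\<close>, \<open>p_pos\<close>, \<open>p_sum\<close>, \<open>lam_pos\<close> or
    \<open>post_consistent\<close>; they only make the ensuing optimisation problem meaningful.\<close>
  have post_bounds: "0 \<le> post n s \<and> post n s \<le> 1" if "n \<in> {1..N}" for n s
    using that post_nonneg post_sum member_le_sum[of n "{1..N}" "\<lambda>k. post k s"] by auto
  have post_measurable: "\<And>n. n \<in> {1..N} \<Longrightarrow> post n \<in> borel_measurable borel"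
    using post_meas by blast
  note [measurable] = q_meas borel_measurable_cond_mean[OF post_measurable]
  interpret M: real_distribution "density lborel q"
    using q_meas q_nonneg q_prob by (intro real_distribution_density_lborel) auto
  define B where "B = (\<Sum>n=1..N. \<bar>v n\<bar>)"
  have cond_mean_bounded: "- B \<le> cond_mean N v post s \<and> cond_mean N v post s \<le> B" for s
    using abs_cond_mean_le[of N post s v] post_bounds unfolding B_def by (simp add: abs_le_iff)
  have support: "AE s in density lborel q. s \<in> {s. 0 < q s}"
    using q_nonneg by (subst AE_density) auto
  have "(\<integral>s. cond_mean N v post s * quantile (cdf (gauss \<sigma>Z T)) (cdf (density lborel q) s) \<partial>density lborel q)
      = (\<integral>s. cond_mean N v post s * quantile (cdf (gauss \<sigma>Z T)) (cdf (density lborel q) s) * q s \<partial>lborel)"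
    using borel_measurable_quantile_cdf[OF real_distribution_gauss[OF sig_pos T_pos]] q_nonneg
    by (subst integral_density) (auto simp: mult_ac)
  moreover have "mutual_info N p post q
      = (\<Sum>n=1..N. \<integral>s. ln (post n s) * post n s * q s \<partial>lborel) - (\<Sum>n=1..N. ln (p n) * p n)"
    using q_nonneg q_prob post_bounds
    by (intro mutual_info_eq_integral_ln[OF q_meas _ _ post_measurable])
       (auto intro: integrableI_nonneg simp: less_top[symmetric])
  ultimately show ?thesis
    using M.integral_mult_quantile_cdf_eq_W2_sq[OF measure_density_lborel_singleton[OF q_meas]
        real_distribution_gauss[OF sig_pos T_pos] integrable_gauss_square[OF sig_pos T_pos] _
        cond_mean_bounded support strict_mono_on_imp_mono_on[OF mono]]
    by simp
qed

end
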